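(* Let $X\in\mathbb{R}^{m\times n}$ be fixed, $V=\frac1nXX^\top$, $W^K,W^Q\in\mathbb{R}^{n\times n_k}$ with i.i.d. $\mathcal N(0,1)$ entries, $Y=\frac1nXW^KW^{Q,\top}X^\top$, $\tau>0$, and $A=I+\mathrm{Softmax}(\tau^{-1}Y)-\frac1m\mathbf 1\mathbf 1^\top$ (Softmax row-wise). Then $$\mathbb{E}[A^{\alpha\alpha'}A^{\beta\beta'}A^{\delta\delta'}A^{\omega\omega'}]-\mathbb{E}[A^{\alpha\alpha'}A^{\beta\beta'}]\mathbb{E}[A^{\delta\delta'}A^{\omega\omega'}]=\frac{n_k}{\tau^2m^2}\Big(\delta_{\alpha\alpha'}\delta_{\delta\delta'}S_1^{\beta\beta',\omega\omega'}+\delta_{\alpha\alpha'}\delta_{\omega\omega'}S_1^{\beta\beta',\delta\delta'}+\delta_{\beta\beta'}\delta_{\delta\delta'}S_1^{\alpha\alpha',\omega\omega'}+\delta_{\beta\beta'}\delta_{\omega\omega'}S_1^{\alpha\alpha',\delta\delta'}\Big)+O(n_k\tau^{-3}).$$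
   Context: $\delta_{\alpha\beta}$ is the Kronecker delta. With $V^{\alpha\bar x}=\frac1m\sum_\nu V^{\alpha\nu}$ and $V^{\bar x\bar x}=\frac1{m^2}\sum_{\nu,\kappa}V^{\nu\kappa}$: $S_1^{\alpha\delta,\beta\omega}=V^{\alpha\beta}(V^{\delta\omega}-V^{\delta\bar x}-V^{\omega\bar x}+V^{\bar x\bar x})$. $O(n_k\tau^{-3})$ denotes a remainder bounded by a constant (independent of $\tau$) times $n_k\tau^{-3}$ as $\tau\to\infty$. *)

theory Defs
  imports "HOL-Probability.Probability" "HOL-Library.Landau_Symbols"
begin

definition std_gauss :: "real measure" where
  "std_gauss = density lborel std_normal_density"

text \<open>Law of an n x nk matrix with i.i.d. N(0,1) entries (entries indexed by (i,c),
  i < n, c < nk; values outside the index set are undefined by PiM convention).\<close>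
definition gauss_matrix :: "nat \<Rightarrow> nat \<Rightarrow> (nat \<times> nat \<Rightarrow> real) measure" where
  "gauss_matrix n nk = PiM ({..<n} \<times> {..<nk}) (\<lambda>_. std_gauss)"

definition WKQ_law :: "nat \<Rightarrow> nat \<Rightarrow> ((nat \<times> nat \<Rightarrow> real) \<times> (nat \<times> nat \<Rightarrow> real)) measure" where
  "WKQ_law n nk = gauss_matrix n nk \<Otimes>\<^sub>M gauss_matrix n nk"

definition Ymat :: "nat \<Rightarrow> nat \<Rightarrow> (nat \<Rightarrow> nat \<Rightarrow> real) \<Rightarrow>
    (nat \<times> nat \<Rightarrow> real) \<Rightarrow> (nat \<times> nat \<Rightarrow> real) \<Rightarrow> nat \<Rightarrow> nat \<Rightarrow> real" where
  "Ymat n nk X WK WQ a b =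
     (1 / real n) * (\<Sum>i<n. \<Sum>j<n. \<Sum>c<nk. X a i * WK (i, c) * WQ (j, c) * X b j)"

definition softmax_row :: "nat \<Rightarrow> (nat \<Rightarrow> nat \<Rightarrow> real) \<Rightarrow> nat \<Rightarrow> nat \<Rightarrow> real" where
  "softmax_row m Z a b = exp (Z a b) / (\<Sum>c<m. exp (Z a c))"

definition Amat :: "nat \<Rightarrow> nat \<Rightarrow> nat \<Rightarrow> (nat \<Rightarrow> nat \<Rightarrow> real) \<Rightarrow> real \<Rightarrow>
    (nat \<times> nat \<Rightarrow> real) \<Rightarrow> (nat \<times> nat \<Rightarrow> real) \<Rightarrow> nat \<Rightarrow> nat \<Rightarrow> real" where
  "Amat m n nk X \<tau> WK WQ a b =
     (if a = b then 1 else 0)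
     + softmax_row m (\<lambda>p q. Ymat n nk X WK WQ p q / \<tau>) a b - 1 / real m"

definition Vmat :: "nat \<Rightarrow> (nat \<Rightarrow> nat \<Rightarrow> real) \<Rightarrow> nat \<Rightarrow> nat \<Rightarrow> real" where
  "Vmat n X a b = (1 / real n) * (\<Sum>i<n. X a i * X b i)"

definition Vbar :: "nat \<Rightarrow> nat \<Rightarrow> (nat \<Rightarrow> nat \<Rightarrow> real) \<Rightarrow> nat \<Rightarrow> real" where
  "Vbar m n X a = (1 / real m) * (\<Sum>v<m. Vmat n X a v)"

definition Vbarbar :: "nat \<Rightarrow> nat \<Rightarrow> (nat \<Rightarrow> nat \<Rightarrow> real) \<Rightarrow> real" where
  "Vbarbar m n X = (1 / real m ^ 2) * (\<Sum>v<m. \<Sum>k<m. Vmat n X v k)"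

definition S1 :: "nat \<Rightarrow> nat \<Rightarrow> (nat \<Rightarrow> nat \<Rightarrow> real) \<Rightarrow> nat \<Rightarrow> nat \<Rightarrow> nat \<Rightarrow> nat \<Rightarrow> real" where
  "S1 m n X a d b w =
     Vmat n X a b * (Vmat n X d w - Vbar m n X d - Vbar m n X w + Vbarbar m n X)"

definition kdelta :: "nat \<Rightarrow> nat \<Rightarrow> real" where
  "kdelta a b = (if a = b then 1 else 0)"

end

theory Submission
  imports Defs
begin

text \<open>
  Write \<open>A = \<delta> + e\<close> entrywise, with \<open>e = Softmax(Y/\<tau>) - 1/m\<close>. Since the softmax of the
  zero matrix is uniform, \<open>e = L/\<tau> + O(|Y|\<^sup>2/\<tau>\<^sup>2)\<close> with the linear term
  \<open>L(a,b) = (Y(a,b) - (1/m) \<Sum>c. Y(a,c)) / m\<close>, and moreover \<open>|e| \<le> 1\<close>. Expanding the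
  products, the covariance is a combination of second, third and fourth moments of \<open>e\<close>; the
  only contributions of order \<open>1/\<tau>\<^sup>2\<close> are the four terms \<open>\<delta> \<delta> E[e e']\<close>, and
  \<open>E[e e'] = E[L L']/\<tau>\<^sup>2 + O(1/\<tau>\<^sup>3)\<close>. All remainders are bounded by moments of the envelope
  \<open>\<Sum>a b. |Y(a,b)|\<close>, which are finite because \<open>Y\<close> is a polynomial in Gaussian entries, and
  which vanish for \<open>nk = 0\<close>. Finally \<open>Y\<close> is bilinear in the independent matrices \<open>W\<^sup>K\<close> and
  \<open>W\<^sup>Q\<close>, so \<open>E[Y(a,b) Y(c,d)] = nk V(a,c) V(b,d)\<close>, which turns \<open>E[L L']\<close> into
  \<open>nk S\<^sub>1 / m\<^sup>2\<close>.
\<close>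

section \<open>Softmax near the uniform distribution\<close>

lemma abs_exp_minus_one_minus_le_square:
  fixes x :: real
  assumes "\<bar>x\<bar> \<le> 1"
  shows "\<bar>exp x - 1 - x\<bar> \<le> x\<^sup>2"
proof (cases "x \<ge> 0")
  case True
  then show ?thesis
    using exp_bound[of x] exp_ge_add_one_self[of x] assms zero_le_power2[of x]
    unfolding abs_le_iff by linarith
next
  case False
  define y where "y = - x"
  have y: "0 < y" "y \<le> 1" using False assms by (auto simp: y_def)
  have "exp x = 1 / exp y" by (simp add: y_def exp_minus field_simps)
  also have "\<dots> \<le> 1 / (1 + y)"
    using exp_ge_add_one_self[of y] y by (intro divide_left_mono) auto
  also have "\<dots> \<le> 1 - y + y\<^sup>2"
  proof -
    have "1 \<le> (1 - y + y\<^sup>2) * (1 + y)"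
      using y by (simp add: algebra_simps power2_eq_square)
    then show ?thesis using y by (simp add: divide_simps)
  qed
  finally have "exp x \<le> 1 + x + x\<^sup>2" by (simp add: y_def)
  then show ?thesis
    using exp_ge_add_one_self[of x] zero_le_power2[of x] unfolding abs_le_iff by linarith
qed

lemma abs_mean_le:
  fixes f :: "nat \<Rightarrow> real"
  assumes "0 < m" and "\<And>c. c < m \<Longrightarrow> \<bar>f c\<bar> \<le> v"
  shows "\<bar>(\<Sum>c<m. f c) / real m\<bar> \<le> v"
proof -
  have "\<bar>\<Sum>c<m. f c\<bar> \<le> (\<Sum>c<m. \<bar>f c\<bar>)" by (rule sum_abs)
  also have "\<dots> \<le> real m * v" using assms(2) sum_bounded_above[of "{..<m}" "\<lambda>c. \<bar>f c\<bar>" v] by simp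
  finally show ?thesis using assms(1) by (simp add: abs_divide divide_le_eq mult.commute)
qed

lemma softmax_row_bounds:
  assumes "0 < m" and "b < m"
  shows "0 \<le> softmax_row m Z a b" and "softmax_row m Z a b \<le> 1"
proof -
  have "exp (Z a b) \<le> (\<Sum>c<m. exp (Z a c))"
    using assms by (intro member_le_sum) auto
  moreover have "0 < (\<Sum>c<m. exp (Z a c))"
    using assms by (intro sum_pos) auto
  ultimately show "0 \<le> softmax_row m Z a b" "softmax_row m Z a b \<le> 1"
    unfolding softmax_row_def by auto
qed

lemma abs_softmax_row_minus_inverse_le_1:
  assumes "0 < m" and "b < m"
  shows "\<bar>softmax_row m Z a b - 1 / real m\<bar> \<le> 1"
proof -
  have "0 < 1 / real m" "1 / real m \<le> 1" using assms(1) by auto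
  then show ?thesis
    using softmax_row_bounds[OF assms, of Z a] unfolding abs_le_iff by linarith
qed

definition softmax_first_order :: "nat \<Rightarrow> (nat \<Rightarrow> nat \<Rightarrow> real) \<Rightarrow> nat \<Rightarrow> nat \<Rightarrow> real" where
  "softmax_first_order m Z a b = (Z a b - (\<Sum>c<m. Z a c) / real m) / real m"

lemma softmax_first_order_mult:
  "softmax_first_order m Y a b * softmax_first_order m Y c d
    = (1 / (real m)\<^sup>2) * (Y a b * Y c d - (1 / real m) * (\<Sum>g<m. Y a b * Y c g)
      - (1 / real m) * (\<Sum>f<m. Y a f * Y c d)
      + (1 / (real m)\<^sup>2) * (\<Sum>f<m. \<Sum>g<m. Y a f * Y c g))"
proof -
  have "softmax_first_order m Y a b * softmax_first_order m Y c d
      = (1 / (real m)\<^sup>2) * ((Y a b - (1 / real m) * (\<Sum>f<m. Y a f))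
        * (Y c d - (1 / real m) * (\<Sum>g<m. Y c g)))"
    unfolding softmax_first_order_def by (simp add: power2_eq_square)
  also have "\<dots> = (1 / (real m)\<^sup>2) * (Y a b * Y c d
      - (1 / real m) * (Y a b * (\<Sum>g<m. Y c g))
      - (1 / real m) * ((\<Sum>f<m. Y a f) * Y c d)
      + (1 / (real m)\<^sup>2) * ((\<Sum>f<m. Y a f) * (\<Sum>g<m. Y c g)))"
    by (simp add: algebra_simps power2_eq_square)
  finally show ?thesis
    by (simp only: sum_distrib_left[of "Y a b"] sum_distrib_right[of _ _ "Y c d"] sum_product)
qed

lemma softmax_first_order_divide:
  "softmax_first_order m (\<lambda>a b. Z a b / \<tau>) a b = softmax_first_order m Z a b / \<tau>"
  unfolding softmax_first_order_def
  by (simp add: sum_divide_distrib[symmetric] diff_divide_distrib mult_ac)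

lemma abs_softmax_first_order_le:
  assumes "0 < m" and "b < m" and "\<And>c. c < m \<Longrightarrow> \<bar>Z a c\<bar> \<le> v"
  shows "\<bar>softmax_first_order m Z a b\<bar> \<le> 2 * v"
proof -
  have "\<bar>(\<Sum>c<m. Z a c) / real m\<bar> \<le> v" by (rule abs_mean_le) (use assms in auto)
  then have *: "\<bar>Z a b - (\<Sum>c<m. Z a c) / real m\<bar> \<le> 2 * v"
    using assms(3)[OF assms(2)] by linarith
  have "\<bar>softmax_first_order m Z a b\<bar> \<le> \<bar>Z a b - (\<Sum>c<m. Z a c) / real m\<bar> / 1"
    unfolding softmax_first_order_def abs_divide using assms(1) by (intro divide_left_mono) auto
  with * show ?thesis by simp
qed

lemma sum_exp_ge:
  fixes Z :: "nat \<Rightarrow> real"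
  assumes "\<And>c. c < m \<Longrightarrow> - 1 \<le> Z c"
  shows "real m / 3 \<le> (\<Sum>c<m. exp (Z c))"
proof -
  have "1/3 \<le> exp (- 1 :: real)" using exp_le by (simp add: exp_minus field_simps)
  then have "real m * (1/3) \<le> real m * exp (- 1)" by (intro mult_left_mono) auto
  also have "\<dots> = (\<Sum>c<m. exp (- 1 :: real))" by simp
  also have "\<dots> \<le> (\<Sum>c<m. exp (Z c))" using assms by (intro sum_mono) auto
  finally show ?thesis by simp
qed

lemma softmax_row_minus_first_order_eq:
  fixes Z :: "nat \<Rightarrow> nat \<Rightarrow> real" and a :: nat
  assumes "0 < m"
  defines "r \<equiv> \<lambda>c. exp (Z a c) - 1 - Z a c"
    and "Zm \<equiv> (\<Sum>c<m. Z a c) / real m"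
    and "rm \<equiv> (\<Sum>c<m. exp (Z a c) - 1 - Z a c) / real m"
  shows "softmax_row m Z a b - 1 / real m - softmax_first_order m Z a b
      = (r b - rm - (Z a b - Zm) * (Zm + rm)) / (\<Sum>c<m. exp (Z a c))"
proof -
  define K where "K = 1 + Zm + rm"
  define D where "D = (\<Sum>c<m. exp (Z a c))"
  have "D = (\<Sum>c<m. 1 + Z a c + r c)" by (simp add: D_def r_def)
  also have "\<dots> = real m + (\<Sum>c<m. Z a c) + (\<Sum>c<m. r c)" by (simp add: sum.distrib)
  also have "\<dots> = real m * K" using assms(1) by (simp add: K_def Zm_def rm_def r_def distrib_left)
  finally have DK: "D = real m * K" .
  have "0 < D" unfolding D_def using assms(1) by (intro sum_pos) auto
  then have "K \<noteq> 0" using DK by auto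
  then have "1 / real m = K / D" "(Z a b - Zm) / real m = (Z a b - Zm) * K / D"
    using DK assms(1) by simp_all
  then have "softmax_row m Z a b - 1 / real m - softmax_first_order m Z a b
      = (exp (Z a b) - K - (Z a b - Zm) * K) / D"
    unfolding softmax_row_def softmax_first_order_def D_def[symmetric] Zm_def[symmetric]
    by (simp add: diff_divide_distrib)
  also have "exp (Z a b) - K - (Z a b - Zm) * K = r b - rm - (Z a b - Zm) * (Zm + rm)"
    by (simp add: r_def K_def algebra_simps)
  finally show ?thesis unfolding D_def .
qed

lemma softmax_row_linearization_small:
  assumes m: "0 < m" and b: "b < m" and bound: "\<And>c. c < m \<Longrightarrow> \<bar>Z a c\<bar> \<le> v"
    and v: "v \<le> 1"
  shows "\<bar>softmax_row m Z a b - 1 / real m - softmax_first_order m Z a b\<bar> \<le> 18 * v\<^sup>2"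
proof -
  define r where "r c = exp (Z a c) - 1 - Z a c" for c
  define Zm where "Zm = (\<Sum>c<m. Z a c) / real m"
  define rm where "rm = (\<Sum>c<m. r c) / real m"
  define D where "D = (\<Sum>c<m. exp (Z a c))"
  have v0: "0 \<le> v" using bound[OF b] by auto
  have Zm: "\<bar>Zm\<bar> \<le> v" unfolding Zm_def by (rule abs_mean_le[OF m bound])
  have r: "\<bar>r c\<bar> \<le> v\<^sup>2" if "c < m" for c
  proof -
    have "\<bar>r c\<bar> \<le> (Z a c)\<^sup>2"
      unfolding r_def using bound[OF that] v by (intro abs_exp_minus_one_minus_le_square) auto
    also have "\<dots> \<le> v\<^sup>2" using bound[OF that] by (simp add: abs_le_square_iff[symmetric])
    finally show ?thesis .
  qed
  have rm: "\<bar>rm\<bar> \<le> v\<^sup>2" unfolding rm_def by (rule abs_mean_le[OF m r])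
  have "- 1 \<le> Z a c" if "c < m" for c using bound[OF that] v by linarith
  then have D: "real m / 3 \<le> D" unfolding D_def by (rule sum_exp_ge)
  have "\<bar>(Z a b - Zm) * (Zm + rm)\<bar> \<le> (2 * v) * (v + v\<^sup>2)"
    unfolding abs_mult using bound[OF b] Zm rm v0 by (intro mult_mono) auto
  moreover have "(2 * v) * (v + v\<^sup>2) \<le> 4 * v\<^sup>2"
    using v v0 mult_left_le_one_le[of "v\<^sup>2" v] by (simp add: algebra_simps power2_eq_square)
  ultimately have num: "\<bar>r b - rm - (Z a b - Zm) * (Zm + rm)\<bar> \<le> 6 * v\<^sup>2"
    using r[OF b] rm unfolding abs_le_iff by linarith
  have "\<bar>softmax_row m Z a b - 1 / real m - softmax_first_order m Z a b\<bar>
      = \<bar>r b - rm - (Z a b - Zm) * (Zm + rm)\<bar> / D"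
    using softmax_row_minus_first_order_eq[OF m, of Z a b] D m
    by (simp add: r_def Zm_def rm_def D_def abs_divide)
  also have "\<dots> \<le> 6 * v\<^sup>2 / (real m / 3)"
    using num D m by (intro frac_le) auto
  also have "\<dots> = 18 * v\<^sup>2 / real m" by simp
  also have "\<dots> \<le> 18 * v\<^sup>2 / 1" using m by (intro divide_left_mono) auto
  finally show ?thesis by simp
qed

lemma softmax_row_linearization:
  assumes "0 < m" and "b < m" and "\<And>c. c < m \<Longrightarrow> \<bar>Z a c\<bar> \<le> v"
  shows "\<bar>softmax_row m Z a b - 1 / real m - softmax_first_order m Z a b\<bar> \<le> 18 * v\<^sup>2"
proof (cases "v \<le> 1")
  case True
  then show ?thesis using softmax_row_linearization_small[of m b Z a v] assms by blast
next
  case False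
  have "\<bar>softmax_row m Z a b - 1 / real m\<bar> \<le> 1"
    by (rule abs_softmax_row_minus_inverse_le_1[OF assms(1,2)])
  moreover have "1 + 2 * v \<le> 18 * v\<^sup>2"
  proof -
    have "v * 1 \<le> v * v" using False by (intro mult_left_mono) auto
    then show ?thesis using False unfolding power2_eq_square by linarith
  qed
  moreover have "\<bar>softmax_first_order m Z a b\<bar> \<le> 2 * v"
    by (rule abs_softmax_first_order_le) (use assms in auto)
  ultimately show ?thesis by linarith
qed

section \<open>Moments of sums and of products\<close>

lemma abs_add_power_le:
  fixes a b :: real
  shows "\<bar>a + b\<bar> ^ k \<le> 2 ^ k * (\<bar>a\<bar> ^ k + \<bar>b\<bar> ^ k)"
proof -
  have "\<bar>a + b\<bar> ^ k \<le> (2 * max \<bar>a\<bar> \<bar>b\<bar>) ^ k"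
    by (intro power_mono) auto
  also have "\<dots> = 2 ^ k * max \<bar>a\<bar> \<bar>b\<bar> ^ k" by (simp add: power_mult_distrib)
  also have "\<dots> \<le> 2 ^ k * (\<bar>a\<bar> ^ k + \<bar>b\<bar> ^ k)"
    by (intro mult_left_mono) (auto simp: max_def)
  finally show ?thesis .
qed

lemma (in finite_measure) integrable_abs_power_sum:
  fixes f :: "'i \<Rightarrow> 'a \<Rightarrow> real"
  assumes "finite I"
    and "\<And>i. i \<in> I \<Longrightarrow> f i \<in> borel_measurable M"
    and "\<And>i. i \<in> I \<Longrightarrow> integrable M (\<lambda>x. \<bar>f i x\<bar> ^ k)"
  shows "integrable M (\<lambda>x. \<bar>\<Sum>i\<in>I. f i x\<bar> ^ k)"
  using assms
proof (induction I rule: finite_induct)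
  case empty
  show ?case by simp
next
  case (insert i I)
  show ?case
  proof (rule Bochner_Integration.integrable_bound)
    show "integrable M (\<lambda>x. 2 ^ k * (\<bar>f i x\<bar> ^ k + \<bar>\<Sum>j\<in>I. f j x\<bar> ^ k))"
      using insert by auto
    show "(\<lambda>x. \<bar>\<Sum>j\<in>insert i I. f j x\<bar> ^ k) \<in> borel_measurable M"
      using insert.prems(1) by measurable
    show "AE x in M. norm (\<bar>\<Sum>j\<in>insert i I. f j x\<bar> ^ k)
        \<le> norm (2 ^ k * (\<bar>f i x\<bar> ^ k + \<bar>\<Sum>j\<in>I. f j x\<bar> ^ k))"
      using insert.hyps abs_add_power_le by simp
  qed
qed

lemma
  fixes f :: "'i \<Rightarrow> 'a \<Rightarrow> real"
  assumes "prob_space M" and "finite I" and "J \<subseteq> I"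
    and "\<And>j. j \<in> J \<Longrightarrow> integrable M (f j)"
  shows integrable_PiM_prod_subset: "integrable (PiM I (\<lambda>_. M)) (\<lambda>x. \<Prod>j\<in>J. f j (x j))"
    and integral_PiM_prod_subset:
      "(\<integral>x. (\<Prod>j\<in>J. f j (x j)) \<partial>PiM I (\<lambda>_. M)) = (\<Prod>j\<in>J. integral\<^sup>L M (f j))"
proof -
  interpret product_prob_space "\<lambda>_. M" I
    using assms(1) by (simp add: product_prob_space_def product_prob_space_axioms_def
        product_sigma_finite_def prob_space_imp_sigma_finite)
  define g where "g j = (\<lambda>x. if j \<in> J then f j x else 1)" for j
  have g: "integrable M (g i)" for i
    using assms(4) by (cases "i \<in> J") (simp_all add: g_def)
  have "(\<Prod>i\<in>I. g i (x i)) = (\<Prod>j\<in>J. f j (x j))" for x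
    using assms(2,3) by (simp add: g_def prod.inter_restrict[symmetric] Int_absorb1)
  then have eq: "(\<lambda>x. \<Prod>j\<in>J. f j (x j)) = (\<lambda>x. \<Prod>i\<in>I. g i (x i))" by simp
  show "integrable (PiM I (\<lambda>_. M)) (\<lambda>x. \<Prod>j\<in>J. f j (x j))"
    unfolding eq using assms(2) g by (rule product_integrable_prod)
  have "(\<integral>x. (\<Prod>i\<in>I. g i (x i)) \<partial>PiM I (\<lambda>_. M)) = (\<Prod>i\<in>I. integral\<^sup>L M (g i))"
    using assms(2) g by (rule product_integral_prod)
  also have "\<dots> = (\<Prod>i\<in>I. if i \<in> J then integral\<^sup>L M (f i) else 1)"
    by (intro prod.cong) (simp_all add: g_def M.prob_space)
  also have "\<dots> = (\<Prod>j\<in>J. integral\<^sup>L M (f j))"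
    using assms(2,3) by (simp add: prod.inter_restrict[symmetric] Int_absorb1)
  finally show "(\<integral>x. (\<Prod>j\<in>J. f j (x j)) \<partial>PiM I (\<lambda>_. M)) = (\<Prod>j\<in>J. integral\<^sup>L M (f j))"
    unfolding eq .
qed

lemma
  fixes f g :: "_ \<Rightarrow> real"
  assumes "sigma_finite_measure M1" and "sigma_finite_measure M2"
    and f: "integrable M1 f" and g: "integrable M2 g"
  shows integrable_pair_measure_mult: "integrable (M1 \<Otimes>\<^sub>M M2) (\<lambda>w. f (fst w) * g (snd w))"
    and integral_pair_measure_mult:
      "(\<integral>w. f (fst w) * g (snd w) \<partial>(M1 \<Otimes>\<^sub>M M2)) = integral\<^sup>L M1 f * integral\<^sup>L M2 g"
proof -
  interpret pair_sigma_finite M1 M2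
    using assms(1,2) by (simp add: pair_sigma_finite_def)
  have [measurable]: "f \<in> borel_measurable M1" "g \<in> borel_measurable M2"
    using f g by auto
  show int: "integrable (M1 \<Otimes>\<^sub>M M2) (\<lambda>w. f (fst w) * g (snd w))"
  proof (rule Fubini_integrable)
    have "integrable M1 (\<lambda>x. \<bar>f x\<bar> * (\<integral>y. \<bar>g y\<bar> \<partial>M2))"
      using f by (intro integrable_mult_left integrable_abs)
    then show "integrable M1 (\<lambda>x. \<integral>y. norm (f (fst (x, y)) * g (snd (x, y))) \<partial>M2)"
      by (simp add: abs_mult)
    show "AE x in M1. integrable M2 (\<lambda>y. f (fst (x, y)) * g (snd (x, y)))"
      using g by simp
  qed measurable
  have "(\<integral>w. f (fst w) * g (snd w) \<partial>(M1 \<Otimes>\<^sub>M M2)) = (\<integral>x. (\<integral>y. f x * g y \<partial>M2) \<partial>M1)"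
    using int by (subst integral_fst'[symmetric]) (simp_all add: case_prod_beta')
  also have "\<dots> = integral\<^sup>L M1 f * integral\<^sup>L M2 g" by simp
  finally show "(\<integral>w. f (fst w) * g (snd w) \<partial>(M1 \<Otimes>\<^sub>M M2)) = integral\<^sup>L M1 f * integral\<^sup>L M2 g" .
qed

section \<open>Gaussian matrices\<close>

lemma prob_space_std_gauss: "prob_space std_gauss"
  unfolding std_gauss_def by (rule prob_space_normal_density) simp

lemma integral_std_gauss_power:
  "(\<integral>x. x ^ k \<partial>std_gauss) = (\<integral>x. std_normal_density x * x ^ k \<partial>lborel)"
  unfolding std_gauss_def by (subst integral_density) (auto simp: normal_density_nonneg)

lemma integrable_std_gauss_power: "integrable std_gauss (\<lambda>x. x ^ k)"
  unfolding std_gauss_def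
  by (subst integrable_density) (auto simp: integrable_std_normal_moment normal_density_nonneg)

lemma integrable_std_gauss_abs_power: "integrable std_gauss (\<lambda>x. \<bar>x\<bar> ^ k)"
  unfolding std_gauss_def
  by (subst integrable_density) (auto simp: integrable_std_normal_moment_abs normal_density_nonneg)

lemma std_gauss_mean: "(\<integral>x. x \<partial>std_gauss) = 0"
  using integral_std_normal_moment_odd[of 0] integral_std_gauss_power[of 1] by simp

lemma std_gauss_second_moment: "(\<integral>x. x\<^sup>2 \<partial>std_gauss) = 1"
  using integral_std_normal_moment_even[of 1] by (simp add: integral_std_gauss_power)

lemma prob_space_gauss_matrix: "prob_space (gauss_matrix n nk)"
  unfolding gauss_matrix_def by (intro prob_space_PiM prob_space_std_gauss)

lemma
  assumes "p \<in> {..<n} \<times> {..<nk}"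
  shows integrable_gauss_matrix_abs_power: "integrable (gauss_matrix n nk) (\<lambda>W. \<bar>W p\<bar> ^ k)"
    and integrable_gauss_matrix_entry: "integrable (gauss_matrix n nk) (\<lambda>W. W p)"
    and gauss_matrix_entry_mean: "(\<integral>W. W p \<partial>gauss_matrix n nk) = 0"
  using integrable_PiM_prod_subset[OF prob_space_std_gauss _ _ integrable_std_gauss_abs_power,
      of "{..<n} \<times> {..<nk}" "{p}" "\<lambda>_. k"]
    integrable_PiM_prod_subset[OF prob_space_std_gauss _ _ integrable_std_gauss_power,
      of "{..<n} \<times> {..<nk}" "{p}" "\<lambda>_. 1"]
    integral_PiM_prod_subset[OF prob_space_std_gauss _ _ integrable_std_gauss_power,
      of "{..<n} \<times> {..<nk}" "{p}" "\<lambda>_. 1"]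
    assms std_gauss_mean
  by (simp_all add: gauss_matrix_def)

lemma
  assumes "p \<in> {..<n} \<times> {..<nk}" and "q \<in> {..<n} \<times> {..<nk}"
  shows integrable_gauss_matrix_mult: "integrable (gauss_matrix n nk) (\<lambda>W. W p * W q)"
    and gauss_matrix_entry_cov: "(\<integral>W. W p * W q \<partial>gauss_matrix n nk) = (if p = q then 1 else 0)"
proof -
  let ?I = "{..<n} \<times> {..<nk}"
  have "integrable (gauss_matrix n nk) (\<lambda>W. W p * W q) \<and>
      (\<integral>W. W p * W q \<partial>gauss_matrix n nk) = (if p = q then 1 else 0)"
  proof (cases "p = q")
    case True
    then show ?thesis
      using integrable_PiM_prod_subset[OF prob_space_std_gauss _ _ integrable_std_gauss_power,
          of ?I "{p}" "\<lambda>_. 2"]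
        integral_PiM_prod_subset[OF prob_space_std_gauss _ _ integrable_std_gauss_power,
          of ?I "{p}" "\<lambda>_. 2"]
        assms std_gauss_second_moment
      by (simp add: gauss_matrix_def power2_eq_square)
  next
    case False
    then show ?thesis
      using integrable_PiM_prod_subset[OF prob_space_std_gauss _ _ integrable_std_gauss_power,
          of ?I "{p, q}" "\<lambda>_. 1"]
        integral_PiM_prod_subset[OF prob_space_std_gauss _ _ integrable_std_gauss_power,
          of ?I "{p, q}" "\<lambda>_. 1"]
        assms std_gauss_mean
      by (simp add: gauss_matrix_def)
  qed
  then show "integrable (gauss_matrix n nk) (\<lambda>W. W p * W q)"
    and "(\<integral>W. W p * W q \<partial>gauss_matrix n nk) = (if p = q then 1 else 0)"
    by simp_all
qed

definition vecmat :: "nat \<Rightarrow> (nat \<Rightarrow> real) \<Rightarrow> (nat \<times> nat \<Rightarrow> real) \<Rightarrow> nat \<Rightarrow> real" where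
  "vecmat n u W c = (\<Sum>i<n. u i * W (i, c))"

lemma
  assumes "c < nk"
  shows integrable_vecmat: "integrable (gauss_matrix n nk) (\<lambda>W. vecmat n u W c)"
    and integral_vecmat: "(\<integral>W. vecmat n u W c \<partial>gauss_matrix n nk) = 0"
proof -
  have int: "integrable (gauss_matrix n nk) (\<lambda>W. u i * W (i, c))" if "i < n" for i
    using assms that by (intro integrable_mult_right integrable_gauss_matrix_entry) auto
  then show "integrable (gauss_matrix n nk) (\<lambda>W. vecmat n u W c)"
    unfolding vecmat_def by (intro Bochner_Integration.integrable_sum) auto
  show "(\<integral>W. vecmat n u W c \<partial>gauss_matrix n nk) = 0"
    unfolding vecmat_def using int assms
    by (simp add: Bochner_Integration.integral_sum gauss_matrix_entry_mean)
qed

lemma integrable_vecmat_abs_power: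
  assumes "c < nk"
  shows "integrable (gauss_matrix n nk) (\<lambda>W. \<bar>vecmat n u W c\<bar> ^ k)"
proof -
  interpret prob_space "gauss_matrix n nk" by (rule prob_space_gauss_matrix)
  show ?thesis
    unfolding vecmat_def
  proof (rule integrable_abs_power_sum)
    fix i assume "i \<in> {..<n}"
    then show "(\<lambda>W. u i * W (i, c)) \<in> borel_measurable (gauss_matrix n nk)"
      and "integrable (gauss_matrix n nk) (\<lambda>W. \<bar>u i * W (i, c)\<bar> ^ k)"
      using assms integrable_gauss_matrix_entry[of "(i, c)"]
        integrable_gauss_matrix_abs_power[of "(i, c)"]
      by (auto simp: abs_mult power_mult_distrib)
  qed simp
qed

lemma
  assumes "c < nk" and "c' < nk"
  shows integrable_vecmat_mult:
      "integrable (gauss_matrix n nk) (\<lambda>W. vecmat n u W c * vecmat n v W c')"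
    and integral_vecmat_mult: "(\<integral>W. vecmat n u W c * vecmat n v W c' \<partial>gauss_matrix n nk)
      = (if c = c' then (\<Sum>i<n. u i * v i) else 0)"
proof -
  have eq: "vecmat n u W c * vecmat n v W c' = (\<Sum>i<n. \<Sum>j<n. u i * v j * (W (i, c) * W (j, c')))"
    for W unfolding vecmat_def sum_product by (simp add: ac_simps)
  have int: "integrable (gauss_matrix n nk) (\<lambda>W. W (i, c) * W (j, c'))" if "i < n" "j < n" for i j
    using assms that by (intro integrable_gauss_matrix_mult) auto
  show "integrable (gauss_matrix n nk) (\<lambda>W. vecmat n u W c * vecmat n v W c')"
    unfolding eq by (intro Bochner_Integration.integrable_sum integrable_mult_right) (auto intro!: int)
  have "(\<integral>W. vecmat n u W c * vecmat n v W c' \<partial>gauss_matrix n nk)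
      = (\<Sum>i<n. \<integral>W. (\<Sum>j<n. u i * v j * (W (i, c) * W (j, c'))) \<partial>gauss_matrix n nk)"
    unfolding eq
    by (rule Bochner_Integration.integral_sum)
      (auto intro!: Bochner_Integration.integrable_sum integrable_mult_right int)
  also have "\<dots> = (\<Sum>i<n. \<Sum>j<n. u i * v j * (\<integral>W. W (i, c) * W (j, c') \<partial>gauss_matrix n nk))"
    by (intro sum.cong refl, subst Bochner_Integration.integral_sum)
      (auto intro!: integrable_mult_right int)
  also have "\<dots> = (\<Sum>i<n. \<Sum>j<n. u i * v j * (if (i, c) = (j, c') then 1 else 0))"
    using assms by (intro sum.cong refl) (simp add: gauss_matrix_entry_cov)
  also have "\<dots> = (if c = c' then (\<Sum>i<n. u i * v i) else 0)"
    by (simp add: if_distrib sum.delta cong: if_cong)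
  finally show "(\<integral>W. vecmat n u W c * vecmat n v W c' \<partial>gauss_matrix n nk)
      = (if c = c' then (\<Sum>i<n. u i * v i) else 0)" .
qed

lemma prob_space_WKQ_law: "prob_space (WKQ_law n nk)"
proof -
  interpret G: prob_space "gauss_matrix n nk" by (rule prob_space_gauss_matrix)
  interpret pair_prob_space "gauss_matrix n nk" "gauss_matrix n nk" ..
  show ?thesis unfolding WKQ_law_def by (rule prob_space_axioms)
qed

lemma
  fixes f g :: "_ \<Rightarrow> real"
  assumes "integrable (gauss_matrix n nk) f" and "integrable (gauss_matrix n nk) g"
  shows integrable_WKQ_law_mult: "integrable (WKQ_law n nk) (\<lambda>W. f (fst W) * g (snd W))"
    and integral_WKQ_law_mult: "(\<integral>W. f (fst W) * g (snd W) \<partial>WKQ_law n nk)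
      = integral\<^sup>L (gauss_matrix n nk) f * integral\<^sup>L (gauss_matrix n nk) g"
  using integrable_pair_measure_mult integral_pair_measure_mult
    prob_space_imp_sigma_finite[OF prob_space_gauss_matrix] assms
  unfolding WKQ_law_def by blast+

section \<open>The attention logits\<close>

abbreviation Yrv :: "nat \<Rightarrow> nat \<Rightarrow> (nat \<Rightarrow> nat \<Rightarrow> real) \<Rightarrow>
    (nat \<times> nat \<Rightarrow> real) \<times> (nat \<times> nat \<Rightarrow> real) \<Rightarrow> nat \<Rightarrow> nat \<Rightarrow> real" where
  "Yrv n nk X W \<equiv> Ymat n nk X (fst W) (snd W)"

lemma Ymat_eq_sum_vecmat:
  "Ymat n nk X WK WQ a b = (1 / real n) * (\<Sum>c<nk. vecmat n (X a) WK c * vecmat n (X b) WQ c)"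
proof -
  have "(\<Sum>i<n. \<Sum>j<n. \<Sum>c<nk. X a i * WK (i, c) * WQ (j, c) * X b j)
      = (\<Sum>c<nk. \<Sum>i<n. \<Sum>j<n. X a i * WK (i, c) * WQ (j, c) * X b j)"
    by (subst sum.swap, subst sum.swap) (simp add: sum.swap[of _ "{..<n}" "{..<nk}"])
  also have "\<dots> = (\<Sum>c<nk. vecmat n (X a) WK c * vecmat n (X b) WQ c)"
    unfolding vecmat_def sum_product by (intro sum.cong refl) (simp add: ac_simps)
  finally show ?thesis unfolding Ymat_def by simp
qed

lemma integrable_Ymat: "integrable (WKQ_law n nk) (\<lambda>W. Yrv n nk X W a b)"
  unfolding Ymat_eq_sum_vecmat
  by (intro integrable_mult_right Bochner_Integration.integrable_sum integrable_WKQ_law_mult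
      integrable_vecmat) auto

lemma Ymat_measurable [measurable]: "(\<lambda>W. Yrv n nk X W a b) \<in> borel_measurable (WKQ_law n nk)"
  using integrable_Ymat by blast

lemma integral_Ymat: "(\<integral>W. Yrv n nk X W a b \<partial>WKQ_law n nk) = 0"
proof -
  have "(\<integral>W. vecmat n (X a) (fst W) c * vecmat n (X b) (snd W) c \<partial>WKQ_law n nk) = 0"
    if "c < nk" for c
    using integral_WKQ_law_mult[OF integrable_vecmat integrable_vecmat, OF that that]
    by (simp add: integral_vecmat[OF that])
  then show ?thesis
    unfolding Ymat_eq_sum_vecmat
    by (subst integral_mult_right_zero, subst Bochner_Integration.integral_sum)
       (auto intro!: integrable_WKQ_law_mult integrable_vecmat)
qed

lemma integrable_Ymat_abs_power:
  "integrable (WKQ_law n nk) (\<lambda>W. \<bar>Yrv n nk X W a b\<bar> ^ k)"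
proof -
  interpret prob_space "WKQ_law n nk" by (rule prob_space_WKQ_law)
  define F where "F c W = vecmat n (X a) (fst W) c * vecmat n (X b) (snd W) c" for c W
  have "integrable (WKQ_law n nk) (\<lambda>W. \<bar>\<Sum>c<nk. F c W\<bar> ^ k)"
  proof (rule integrable_abs_power_sum)
    fix c assume "c \<in> {..<nk}"
    then show "F c \<in> borel_measurable (WKQ_law n nk)"
      and "integrable (WKQ_law n nk) (\<lambda>W. \<bar>F c W\<bar> ^ k)"
      unfolding F_def abs_mult power_mult_distrib
      by (auto intro!: borel_measurable_integrable integrable_WKQ_law_mult integrable_vecmat
          integrable_vecmat_abs_power)
  qed simp
  then have "integrable (WKQ_law n nk) (\<lambda>W. (1 / real n) ^ k * \<bar>\<Sum>c<nk. F c W\<bar> ^ k)"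
    by (rule integrable_mult_right)
  then show ?thesis
    unfolding Ymat_eq_sum_vecmat F_def abs_mult power_mult_distrib by simp
qed

lemma
  assumes "0 < n"
  shows integrable_Ymat_mult:
      "integrable (WKQ_law n nk) (\<lambda>W. Yrv n nk X W a b * Yrv n nk X W c d)"
    and integral_Ymat_mult:
      "(\<integral>W. Yrv n nk X W a b * Yrv n nk X W c d \<partial>WKQ_law n nk) = real nk * Vmat n X a c * Vmat n X b d"
proof -
  define F where "F f g W = (vecmat n (X a) (fst W) f * vecmat n (X c) (fst W) g)
      * (vecmat n (X b) (snd W) f * vecmat n (X d) (snd W) g)" for f g W
  have eq: "Yrv n nk X W a b * Yrv n nk X W c d = (1 / real n) * (1 / real n) * (\<Sum>f<nk. \<Sum>g<nk. F f g W)"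
    for W unfolding Ymat_eq_sum_vecmat F_def by (simp add: sum_product ac_simps)
  have intF: "integrable (WKQ_law n nk) (F f g)" if "f < nk" "g < nk" for f g
    unfolding F_def using that by (intro integrable_WKQ_law_mult integrable_vecmat_mult)
  have EF: "integral\<^sup>L (WKQ_law n nk) (F f g)
      = (if f = g then (\<Sum>i<n. X a i * X c i) * (\<Sum>j<n. X b j * X d j) else 0)"
    if "f < nk" "g < nk" for f g
    unfolding F_def
    using integral_WKQ_law_mult[OF integrable_vecmat_mult[OF that, of n "X a" "X c"]
        integrable_vecmat_mult[OF that, of n "X b" "X d"]]
    by (simp add: integral_vecmat_mult[OF that])
  show "integrable (WKQ_law n nk) (\<lambda>W. Yrv n nk X W a b * Yrv n nk X W c d)"
    unfolding eq using intF
    by (intro integrable_mult_right Bochner_Integration.integrable_sum) auto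
  have "(\<integral>W. Yrv n nk X W a b * Yrv n nk X W c d \<partial>WKQ_law n nk)
      = (1 / real n) * (1 / real n) * (\<Sum>f<nk. \<Sum>g<nk. integral\<^sup>L (WKQ_law n nk) (F f g))"
    unfolding eq using intF
    by (subst integral_mult_right_zero, subst Bochner_Integration.integral_sum)
      (auto intro!: Bochner_Integration.integrable_sum simp: Bochner_Integration.integral_sum)
  also have "\<dots> = (1 / real n) * (1 / real n) * (\<Sum>f<nk. (\<Sum>i<n. X a i * X c i) * (\<Sum>j<n. X b j * X d j))"
    using EF by (intro arg_cong[where f = "\<lambda>s. _ * s"] sum.cong refl) (simp add: sum.delta)
  also have "\<dots> = real nk * Vmat n X a c * Vmat n X b d"
    unfolding Vmat_def by simp
  finally show "(\<integral>W. Yrv n nk X W a b * Yrv n nk X W c d \<partial>WKQ_law n nk)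
      = real nk * Vmat n X a c * Vmat n X b d" .
qed

lemma integrable_softmax_first_order_Ymat:
  "integrable (WKQ_law n nk) (\<lambda>W. softmax_first_order m (Yrv n nk X W) a b)"
  unfolding softmax_first_order_def
  by (intro Bochner_Integration.integrable_divide Bochner_Integration.integrable_diff
      Bochner_Integration.integrable_sum integrable_Ymat)

lemma softmax_first_order_Ymat_measurable [measurable]:
  "(\<lambda>W. softmax_first_order m (Yrv n nk X W) a b) \<in> borel_measurable (WKQ_law n nk)"
  using integrable_softmax_first_order_Ymat by blast

lemma integral_softmax_first_order_Ymat:
  "(\<integral>W. softmax_first_order m (Yrv n nk X W) a b \<partial>WKQ_law n nk) = 0"
  unfolding softmax_first_order_def
  by (simp add: Bochner_Integration.integral_diff Bochner_Integration.integrable_sum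
      Bochner_Integration.integral_sum integrable_Ymat integral_Ymat)

lemma integral_softmax_first_order_Ymat_mult:
  assumes "0 < n"
  shows "(\<integral>W. softmax_first_order m (Yrv n nk X W) a b * softmax_first_order m (Yrv n nk X W) c d
      \<partial>WKQ_law n nk) = real nk / (real m)\<^sup>2 * S1 m n X a b c d"
proof -
  let ?Y = "Yrv n nk X"
  let ?P = "WKQ_law n nk"
  have int: "integrable ?P (\<lambda>W. ?Y W p q * ?Y W r s)" for p q r s
    using integrable_Ymat_mult[OF assms] .
  have "(\<integral>W. softmax_first_order m (?Y W) a b * softmax_first_order m (?Y W) c d \<partial>?P)
      = (1 / (real m)\<^sup>2) * (real nk * Vmat n X a c * Vmat n X b d
        - (1 / real m) * (\<Sum>g<m. real nk * Vmat n X a c * Vmat n X b g)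
        - (1 / real m) * (\<Sum>f<m. real nk * Vmat n X a c * Vmat n X f d)
        + (1 / (real m)\<^sup>2) * (\<Sum>f<m. \<Sum>g<m. real nk * Vmat n X a c * Vmat n X f g))"
    unfolding softmax_first_order_mult
    by (simp add: int integral_Ymat_mult[OF assms] Bochner_Integration.integral_diff
        Bochner_Integration.integral_add Bochner_Integration.integrable_diff
        Bochner_Integration.integrable_add Bochner_Integration.integrable_sum
        Bochner_Integration.integral_sum
        del: Bochner_Integration.integral_mult_right_zero)
  also have "\<dots> = real nk / (real m)\<^sup>2 * S1 m n X a b c d"
  proof -
    have "Vmat n X f d = Vmat n X d f" for f unfolding Vmat_def by (simp add: mult.commute)
    then show ?thesis
      unfolding S1_def Vbar_def Vbarbar_def
      by (simp add: sum_distrib_left[symmetric] sum_distrib_right[symmetric] field_simps)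
  qed
  finally show ?thesis .
qed

definition Ymat_abs_sum :: "nat \<Rightarrow> nat \<Rightarrow> nat \<Rightarrow> (nat \<Rightarrow> nat \<Rightarrow> real) \<Rightarrow>
    (nat \<times> nat \<Rightarrow> real) \<times> (nat \<times> nat \<Rightarrow> real) \<Rightarrow> real" where
  "Ymat_abs_sum m n nk X W = (\<Sum>a<m. \<Sum>b<m. \<bar>Yrv n nk X W a b\<bar>)"

lemma Ymat_abs_sum_nonneg: "0 \<le> Ymat_abs_sum m n nk X W"
  unfolding Ymat_abs_sum_def by (intro sum_nonneg) auto

lemma abs_Ymat_le_Ymat_abs_sum:
  assumes "a < m" and "b < m"
  shows "\<bar>Yrv n nk X W a b\<bar> \<le> Ymat_abs_sum m n nk X W"
proof -
  have "\<bar>Yrv n nk X W a b\<bar> \<le> (\<Sum>b<m. \<bar>Yrv n nk X W a b\<bar>)"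
    using assms(2) by (intro member_le_sum) auto
  also have "\<dots> \<le> Ymat_abs_sum m n nk X W"
    unfolding Ymat_abs_sum_def using assms(1)
    by (intro member_le_sum[where f = "\<lambda>a. \<Sum>b<m. \<bar>Yrv n nk X W a b\<bar>"]) (auto intro: sum_nonneg)
  finally show ?thesis .
qed

lemma Ymat_abs_sum_eq_0: "nk = 0 \<Longrightarrow> Ymat_abs_sum m n nk X W = 0"
  by (simp add: Ymat_abs_sum_def Ymat_def)

lemma integrable_Ymat_abs_sum_power:
  "integrable (WKQ_law n nk) (\<lambda>W. Ymat_abs_sum m n nk X W ^ k)"
proof -
  interpret prob_space "WKQ_law n nk" by (rule prob_space_WKQ_law)
  have "integrable (WKQ_law n nk) (\<lambda>W. \<bar>\<Sum>a<m. \<Sum>b<m. \<bar>Yrv n nk X W a b\<bar>\<bar> ^ k)"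
  proof (rule integrable_abs_power_sum)
    fix a
    show "(\<lambda>W. \<Sum>b<m. \<bar>Yrv n nk X W a b\<bar>) \<in> borel_measurable (WKQ_law n nk)"
      by measurable
    show "integrable (WKQ_law n nk) (\<lambda>W. \<bar>\<Sum>b<m. \<bar>Yrv n nk X W a b\<bar>\<bar> ^ k)"
      by (rule integrable_abs_power_sum) (auto simp: integrable_Ymat_abs_power)
  qed simp
  then show ?thesis
    using Ymat_abs_sum_nonneg unfolding Ymat_abs_sum_def by simp
qed

section \<open>Covariance of linearized perturbations\<close>

lemma abs_mult_le_of_abs_le_1:
  fixes d y Y :: real
  assumes "\<bar>d\<bar> \<le> 1" and "\<bar>y\<bar> \<le> Y"
  shows "\<bar>d * y\<bar> \<le> Y"
proof -
  have "\<bar>d\<bar> * \<bar>y\<bar> \<le> 1 * Y" by (rule mult_mono) (use assms in auto)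
  then show ?thesis by (simp add: abs_mult)
qed

locale linearized_perturbation = prob_space P for P :: "'a measure" +
  fixes K :: "'k set" and e L :: "'k \<Rightarrow> 'a \<Rightarrow> real" and B :: "'a \<Rightarrow> real" and t :: real
  assumes t_pos: "0 < t" and t_le_1: "t \<le> 1"
    and e_measurable: "k \<in> K \<Longrightarrow> e k \<in> borel_measurable P"
    and L_measurable: "k \<in> K \<Longrightarrow> L k \<in> borel_measurable P"
    and abs_e_le_1: "k \<in> K \<Longrightarrow> \<bar>e k x\<bar> \<le> 1"
    and abs_L_le: "k \<in> K \<Longrightarrow> \<bar>L k x\<bar> \<le> B x"
    and abs_e_minus_L_le: "k \<in> K \<Longrightarrow> \<bar>e k x - t * L k x\<bar> \<le> (t * B x)\<^sup>2"
    and B_nonneg: "0 \<le> B x"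
    and integrable_B: "integrable P B"
    and integrable_B2: "integrable P (\<lambda>x. B x ^ 2)"
    and integrable_B3: "integrable P (\<lambda>x. B x ^ 3)"
    and expectation_L_eq_0: "k \<in> K \<Longrightarrow> expectation (L k) = 0"
begin

lemma abs_e_le: "k \<in> K \<Longrightarrow> \<bar>e k x\<bar> \<le> 2 * t * B x"
proof (cases "t * B x \<le> 1")
  case True
  assume k: "k \<in> K"
  have "(t * B x)\<^sup>2 \<le> t * B x * 1"
    unfolding power2_eq_square using True t_pos B_nonneg[of x] by (intro mult_left_mono) auto
  moreover have "\<bar>t * L k x\<bar> \<le> t * B x"
    using abs_L_le[OF k, of x] t_pos by (simp add: abs_mult)
  ultimately show ?thesis using abs_e_minus_L_le[OF k, of x] by linarith
next
  case False
  then show "k \<in> K \<Longrightarrow> \<bar>e k x\<bar> \<le> 2 * t * B x"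
    using abs_e_le_1[of k x] t_pos B_nonneg[of x] by linarith
qed

lemma integrable_of_abs_le_1:
  fixes f :: "'a \<Rightarrow> real"
  assumes "f \<in> borel_measurable P" and "\<And>x. \<bar>f x\<bar> \<le> 1"
  shows "integrable P f"
  by (rule integrable_const_bound[of f 1]) (use assms in auto)

lemma integrable_e: "i \<in> K \<Longrightarrow> integrable P (e i)"
  using e_measurable abs_e_le_1 by (intro integrable_of_abs_le_1)

lemma integrable_e2:
  assumes "i \<in> K" and "j \<in> K"
  shows "integrable P (\<lambda>x. e i x * e j x)"
  using assms e_measurable abs_e_le_1
  by (intro integrable_of_abs_le_1 borel_measurable_times abs_mult_le_of_abs_le_1)

lemma integrable_e3:
  assumes "i \<in> K" and "j \<in> K" and "k \<in> K"
  shows "integrable P (\<lambda>x. e i x * e j x * e k x)"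
  using assms e_measurable abs_e_le_1
  by (intro integrable_of_abs_le_1 borel_measurable_times abs_mult_le_of_abs_le_1)

lemma integrable_e4:
  assumes "i \<in> K" and "j \<in> K" and "k \<in> K" and "l \<in> K"
  shows "integrable P (\<lambda>x. e i x * e j x * e k x * e l x)"
  using assms e_measurable abs_e_le_1
  by (intro integrable_of_abs_le_1 borel_measurable_times abs_mult_le_of_abs_le_1)

lemma integrable_L2: "i \<in> K \<Longrightarrow> j \<in> K \<Longrightarrow> integrable P (\<lambda>x. L i x * L j x)"
proof (rule Bochner_Integration.integrable_bound[OF integrable_B2])
  assume "i \<in> K" "j \<in> K"
  then show "(\<lambda>x. L i x * L j x) \<in> borel_measurable P"
    using L_measurable by (intro borel_measurable_times)
  show "AE x in P. norm (L i x * L j x) \<le> norm (B x ^ 2)"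
    using \<open>i \<in> K\<close> \<open>j \<in> K\<close> abs_L_le B_nonneg
    by (intro AE_I2) (auto simp: abs_mult power2_eq_square intro!: mult_mono)
qed

lemma integrable_L:
  assumes "k \<in> K"
  shows "integrable P (L k)"
proof (rule Bochner_Integration.integrable_bound[OF integrable_B])
  show "L k \<in> borel_measurable P" by (rule L_measurable[OF assms])
  show "AE x in P. norm (L k x) \<le> norm (B x)"
    using abs_L_le[OF assms] B_nonneg by (intro AE_I2) simp
qed

lemma abs_expectation_le_B_power:
  fixes f :: "'a \<Rightarrow> real"
  assumes "integrable P f" and "integrable P (\<lambda>x. B x ^ n)" and "\<And>x. \<bar>f x\<bar> \<le> c * B x ^ n"
  shows "\<bar>expectation f\<bar> \<le> c * expectation (\<lambda>x. B x ^ n)"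
proof -
  have "\<bar>expectation f\<bar> \<le> expectation (\<lambda>x. \<bar>f x\<bar>)"
    using integral_norm_bound[of P f] by simp
  also have "\<dots> \<le> expectation (\<lambda>x. c * B x ^ n)"
    by (intro integral_mono integrable_abs integrable_mult_right assms)
  finally show ?thesis by simp
qed

lemma abs_expectation_e_le:
  assumes "k \<in> K"
  shows "\<bar>expectation (e k)\<bar> \<le> t\<^sup>2 * expectation (\<lambda>x. B x ^ 2)"
proof -
  have "expectation (e k) = expectation (\<lambda>x. e k x - t * L k x)"
    using assms integrable_e integrable_L expectation_L_eq_0 by simp
  also have "\<bar>\<dots>\<bar> \<le> t\<^sup>2 * expectation (\<lambda>x. B x ^ 2)"
    using assms abs_e_minus_L_le integrable_e integrable_L integrable_B2
    by (intro abs_expectation_le_B_power) (simp_all add: power_mult_distrib)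
  finally show ?thesis .
qed

lemma abs_e2_le:
  assumes "i \<in> K" and "j \<in> K"
  shows "\<bar>e i x * e j x\<bar> \<le> 4 * t\<^sup>2 * B x ^ 2"
proof -
  have "\<bar>e i x\<bar> * \<bar>e j x\<bar> \<le> (2 * t * B x) * (2 * t * B x)"
    using abs_e_le[OF assms(1)] abs_e_le[OF assms(2)] by (rule mult_mono) (simp_all add: B_nonneg less_imp_le[OF t_pos])
  then show ?thesis by (simp add: abs_mult power2_eq_square mult_ac)
qed

lemma abs_e3_le:
  assumes "i \<in> K" and "j \<in> K" and "k \<in> K"
  shows "\<bar>e i x * e j x * e k x\<bar> \<le> 8 * t ^ 3 * B x ^ 3"
proof -
  have "\<bar>e i x * e j x\<bar> * \<bar>e k x\<bar> \<le> (4 * t\<^sup>2 * B x ^ 2) * (2 * t * B x)"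
    using abs_e2_le[OF assms(1,2)] abs_e_le[OF assms(3)] by (rule mult_mono) (simp_all add: B_nonneg less_imp_le[OF t_pos])
  then show ?thesis by (simp add: abs_mult power2_eq_square power3_eq_cube mult_ac)
qed

lemma abs_expectation_e2_le:
  "i \<in> K \<Longrightarrow> j \<in> K \<Longrightarrow> \<bar>expectation (\<lambda>x. e i x * e j x)\<bar> \<le> 4 * t\<^sup>2 * expectation (\<lambda>x. B x ^ 2)"
  using abs_expectation_le_B_power[OF integrable_e2 integrable_B2 abs_e2_le] by simp

lemma abs_expectation_e3_le:
  "i \<in> K \<Longrightarrow> j \<in> K \<Longrightarrow> k \<in> K \<Longrightarrow>
    \<bar>expectation (\<lambda>x. e i x * e j x * e k x)\<bar> \<le> 8 * t ^ 3 * expectation (\<lambda>x. B x ^ 3)"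
  using abs_expectation_le_B_power[OF integrable_e3 integrable_B3 abs_e3_le] by simp

lemma abs_expectation_e4_le:
  assumes "i \<in> K" and "j \<in> K" and "k \<in> K" and "l \<in> K"
  shows "\<bar>expectation (\<lambda>x. e i x * e j x * e k x * e l x)\<bar> \<le> 8 * t ^ 3 * expectation (\<lambda>x. B x ^ 3)"
proof (rule abs_expectation_le_B_power[OF integrable_e4[OF assms] integrable_B3])
  fix x
  have "\<bar>e i x * e j x * e k x\<bar> * \<bar>e l x\<bar> \<le> (8 * t ^ 3 * B x ^ 3) * 1"
    using abs_e3_le[OF assms(1-3)] abs_e_le_1[OF assms(4)] by (rule mult_mono) (simp_all add: B_nonneg less_imp_le[OF t_pos])
  then show "\<bar>e i x * e j x * e k x * e l x\<bar> \<le> 8 * t ^ 3 * B x ^ 3"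
    by (simp add: abs_mult)
qed

lemma abs_expectation_e2_minus_L2_le:
  assumes "i \<in> K" and "j \<in> K"
  shows "\<bar>expectation (\<lambda>x. e i x * e j x) - t\<^sup>2 * expectation (\<lambda>x. L i x * L j x)\<bar>
    \<le> 3 * t ^ 3 * expectation (\<lambda>x. B x ^ 3)"
proof -
  have "\<bar>(e i x - t * L i x) * e j x + t * L i x * (e j x - t * L j x)\<bar> \<le> 3 * t ^ 3 * B x ^ 3"
    for x
  proof -
    have "\<bar>(e i x - t * L i x) * e j x\<bar> \<le> (t * B x)\<^sup>2 * (2 * t * B x)"
      unfolding abs_mult using assms abs_e_minus_L_le abs_e_le by (intro mult_mono) auto
    moreover have "\<bar>t * L i x * (e j x - t * L j x)\<bar> \<le> (t * B x) * (t * B x)\<^sup>2"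
      unfolding abs_mult using assms abs_L_le abs_e_minus_L_le t_pos B_nonneg
      by (intro mult_mono) auto
    ultimately show ?thesis
      by (simp add: power2_eq_square power3_eq_cube algebra_simps)
  qed
  moreover have "(e i x - t * L i x) * e j x + t * L i x * (e j x - t * L j x)
      = e i x * e j x - t\<^sup>2 * (L i x * L j x)" for x
    by (simp add: algebra_simps power2_eq_square)
  ultimately have "\<bar>expectation (\<lambda>x. e i x * e j x - t\<^sup>2 * (L i x * L j x))\<bar>
      \<le> 3 * t ^ 3 * expectation (\<lambda>x. B x ^ 3)"
    using assms integrable_e2 integrable_L2 integrable_B3
    by (intro abs_expectation_le_B_power) auto
  then show ?thesis
    using assms integrable_e2 integrable_L2 by simp
qed

lemma expectation_product_expansion:
  assumes "i \<in> K" and "j \<in> K" and "k \<in> K" and "l \<in> K"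
  shows "expectation (\<lambda>x. (d1 + e i x) * (d2 + e j x) * (d3 + e k x) * (d4 + e l x))
      - expectation (\<lambda>x. (d1 + e i x) * (d2 + e j x)) * expectation (\<lambda>x. (d3 + e k x) * (d4 + e l x))
    = d1 * d3 * expectation (\<lambda>x. e j x * e l x) + d1 * d4 * expectation (\<lambda>x. e j x * e k x)
      + d2 * d3 * expectation (\<lambda>x. e i x * e l x) + d2 * d4 * expectation (\<lambda>x. e i x * e k x)
      + d1 * expectation (\<lambda>x. e j x * e k x * e l x) + d2 * expectation (\<lambda>x. e i x * e k x * e l x)
      + d3 * expectation (\<lambda>x. e i x * e j x * e l x) + d4 * expectation (\<lambda>x. e i x * e j x * e k x)
      + expectation (\<lambda>x. e i x * e j x * e k x * e l x)
      - (d1 * expectation (e j) + d2 * expectation (e i) + expectation (\<lambda>x. e i x * e j x))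
        * (d3 * expectation (e l) + d4 * expectation (e k) + expectation (\<lambda>x. e k x * e l x))"
proof -
  note integrable = assms integrable_e integrable_e2 integrable_e3 integrable_e4
  have "(d1 + e i x) * (d2 + e j x) * (d3 + e k x) * (d4 + e l x)
      = d1 * d2 * d3 * d4
      + d2 * d3 * d4 * e i x + d1 * d3 * d4 * e j x + d1 * d2 * d4 * e k x + d1 * d2 * d3 * e l x
      + d3 * d4 * (e i x * e j x) + d2 * d4 * (e i x * e k x) + d2 * d3 * (e i x * e l x)
      + d1 * d4 * (e j x * e k x) + d1 * d3 * (e j x * e l x) + d1 * d2 * (e k x * e l x)
      + d4 * (e i x * e j x * e k x) + d3 * (e i x * e j x * e l x) + d2 * (e i x * e k x * e l x)
      + d1 * (e j x * e k x * e l x) + e i x * e j x * e k x * e l x" for x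
    by algebra
  then have E4: "expectation (\<lambda>x. (d1 + e i x) * (d2 + e j x) * (d3 + e k x) * (d4 + e l x))
      = d1 * d2 * d3 * d4
      + d2 * d3 * d4 * expectation (e i) + d1 * d3 * d4 * expectation (e j)
      + d1 * d2 * d4 * expectation (e k) + d1 * d2 * d3 * expectation (e l)
      + d3 * d4 * expectation (\<lambda>x. e i x * e j x) + d2 * d4 * expectation (\<lambda>x. e i x * e k x)
      + d2 * d3 * expectation (\<lambda>x. e i x * e l x) + d1 * d4 * expectation (\<lambda>x. e j x * e k x)
      + d1 * d3 * expectation (\<lambda>x. e j x * e l x) + d1 * d2 * expectation (\<lambda>x. e k x * e l x)
      + d4 * expectation (\<lambda>x. e i x * e j x * e k x) + d3 * expectation (\<lambda>x. e i x * e j x * e l x)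
      + d2 * expectation (\<lambda>x. e i x * e k x * e l x) + d1 * expectation (\<lambda>x. e j x * e k x * e l x)
      + expectation (\<lambda>x. e i x * e j x * e k x * e l x)"
    by (simp add: integrable prob_space)
  have E2: "expectation (\<lambda>x. (d + e p x) * (d' + e q x))
      = d * d' + d * expectation (e q) + d' * expectation (e p) + expectation (\<lambda>x. e p x * e q x)"
    if "p \<in> K" "q \<in> K" for p q d d'
  proof -
    have "(d + e p x) * (d' + e q x) = d * d' + d * e q x + d' * e p x + e p x * e q x" for x
      by algebra
    then show ?thesis using that by (simp add: integrable_e integrable_e2 prob_space)
  qed
  show ?thesis
    unfolding E4 E2[OF assms(1,2)] E2[OF assms(3,4)] by algebra
qed

lemma covariance_linearization:
  assumes K: "i \<in> K" "j \<in> K" "k \<in> K" "l \<in> K"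
    and d: "\<bar>d1\<bar> \<le> 1" "\<bar>d2\<bar> \<le> 1" "\<bar>d3\<bar> \<le> 1" "\<bar>d4\<bar> \<le> 1"
  shows "\<bar>expectation (\<lambda>x. (d1 + e i x) * (d2 + e j x) * (d3 + e k x) * (d4 + e l x))
      - expectation (\<lambda>x. (d1 + e i x) * (d2 + e j x)) * expectation (\<lambda>x. (d3 + e k x) * (d4 + e l x))
      - t\<^sup>2 * (d1 * d3 * expectation (\<lambda>x. L j x * L l x) + d1 * d4 * expectation (\<lambda>x. L j x * L k x)
        + d2 * d3 * expectation (\<lambda>x. L i x * L l x) + d2 * d4 * expectation (\<lambda>x. L i x * L k x))\<bar>
    \<le> 52 * t ^ 3 * (expectation (\<lambda>x. B x ^ 3) + (expectation (\<lambda>x. B x ^ 2))\<^sup>2)"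
proof -
  define h2 where "h2 = expectation (\<lambda>x. B x ^ 2)"
  define h3 where "h3 = expectation (\<lambda>x. B x ^ 3)"
  have "0 \<le> h2" "0 \<le> h3" unfolding h2_def h3_def using B_nonneg by simp_all
  define F where "F = d1 * expectation (e j) + d2 * expectation (e i) + expectation (\<lambda>x. e i x * e j x)"
  define G where "G = d3 * expectation (e l) + d4 * expectation (e k) + expectation (\<lambda>x. e k x * e l x)"
  have F: "\<bar>F\<bar> \<le> 6 * t\<^sup>2 * h2"
    using abs_mult_le_of_abs_le_1[OF d(1) abs_expectation_e_le[OF K(2)]]
      abs_mult_le_of_abs_le_1[OF d(2) abs_expectation_e_le[OF K(1)]] abs_expectation_e2_le[OF K(1,2)]
    unfolding F_def h2_def by linarith
  have G: "\<bar>G\<bar> \<le> 6 * t\<^sup>2 * h2"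
    using abs_mult_le_of_abs_le_1[OF d(3) abs_expectation_e_le[OF K(4)]]
      abs_mult_le_of_abs_le_1[OF d(4) abs_expectation_e_le[OF K(3)]] abs_expectation_e2_le[OF K(3,4)]
    unfolding G_def h2_def by linarith
  have "\<bar>F * G\<bar> \<le> (6 * t\<^sup>2 * h2) * (6 * t\<^sup>2 * h2)"
    unfolding abs_mult using F G \<open>0 \<le> h2\<close> by (intro mult_mono) auto
  also have "\<dots> = 36 * t ^ 3 * (t * h2\<^sup>2)" by (simp add: power2_eq_square power3_eq_cube)
  also have "\<dots> \<le> 36 * t ^ 3 * (1 * h2\<^sup>2)"
    using t_pos t_le_1 by (intro mult_left_mono mult_right_mono) auto
  finally have FG: "\<bar>F * G\<bar> \<le> 36 * t ^ 3 * h2\<^sup>2" by simp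
  have dd: "\<bar>d * d'\<bar> \<le> 1" if "\<bar>d\<bar> \<le> 1" "\<bar>d'\<bar> \<le> 1" for d d' :: real
    using abs_mult_le_of_abs_le_1[OF that] .
  have pairs: "\<bar>d * d' * (expectation (\<lambda>x. e p x * e q x) - t\<^sup>2 * expectation (\<lambda>x. L p x * L q x))\<bar>
      \<le> 3 * t ^ 3 * h3" if "\<bar>d\<bar> \<le> 1" "\<bar>d'\<bar> \<le> 1" "p \<in> K" "q \<in> K" for d d' p q
    using abs_mult_le_of_abs_le_1[OF dd[OF that(1,2)] abs_expectation_e2_minus_L2_le[OF that(3,4)]]
    unfolding h3_def .
  have triples: "\<bar>d * expectation (\<lambda>x. e p x * e q x * e r x)\<bar> \<le> 8 * t ^ 3 * h3"
    if "\<bar>d\<bar> \<le> 1" "p \<in> K" "q \<in> K" "r \<in> K" for d p q r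
    using abs_mult_le_of_abs_le_1[OF that(1) abs_expectation_e3_le[OF that(2-4)]]
    unfolding h3_def .
  have quadruple: "\<bar>expectation (\<lambda>x. e i x * e j x * e k x * e l x)\<bar> \<le> 8 * t ^ 3 * h3"
    using abs_expectation_e4_le[OF K] unfolding h3_def .
  show ?thesis
    unfolding expectation_product_expansion[OF K] F_def[symmetric] G_def[symmetric]
      h2_def[symmetric] h3_def[symmetric]
    using pairs[OF d(1,3) K(2,4)] pairs[OF d(1,4) K(2,3)] pairs[OF d(2,3) K(1,4)]
      pairs[OF d(2,4) K(1,3)] triples[OF d(1) K(2-4)] triples[OF d(2) K(1,3,4)]
      triples[OF d(3) K(1,2,4)] triples[OF d(4) K(1-3)] quadruple FG
      \<open>0 \<le> h2\<close> \<open>0 \<le> h3\<close> t_pos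
    by (simp add: abs_le_iff algebra_simps)
qed

end

section \<open>The attention matrix\<close>

lemma linearized_perturbation_attention:
  assumes m: "0 < m" and \<tau>: "1 \<le> \<tau>"
  shows "linearized_perturbation (WKQ_law n nk) ({..<m} \<times> {..<m})
    (\<lambda>p W. softmax_row m (\<lambda>a b. Yrv n nk X W a b / \<tau>) (fst p) (snd p) - 1 / real m)
    (\<lambda>p W. softmax_first_order m (Yrv n nk X W) (fst p) (snd p))
    (\<lambda>W. 5 * Ymat_abs_sum m n nk X W) (1 / \<tau>)"
proof (intro linearized_perturbation.intro linearized_perturbation_axioms.intro prob_space_WKQ_law)
  \<comment> \<open>The factor 5 covers both \<open>|L| \<le> 2 \<Sum>|Y|\<close> and the constant \<open>18 \<le> 5\<^sup>2\<close>
    of the softmax linearization.\<close>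
  let ?S = "Ymat_abs_sum m n nk X"
  show "0 < 1 / \<tau>" "1 / \<tau> \<le> 1" using \<tau> by auto
  show "0 \<le> 5 * ?S W" for W using Ymat_abs_sum_nonneg[of m n nk X W] by simp
  show "integrable (WKQ_law n nk) (\<lambda>W. 5 * ?S W)"
    using integrable_Ymat_abs_sum_power[of n nk m X 1] by simp
  show "integrable (WKQ_law n nk) (\<lambda>W. (5 * ?S W) ^ 2)" "integrable (WKQ_law n nk) (\<lambda>W. (5 * ?S W) ^ 3)"
    using integrable_Ymat_abs_sum_power by (simp_all add: power_mult_distrib)
  fix p :: "nat \<times> nat" and W
  assume p: "p \<in> {..<m} \<times> {..<m}"
  have Y: "\<bar>Yrv n nk X W (fst p) c\<bar> \<le> ?S W" if "c < m" for c
    using p that by (intro abs_Ymat_le_Ymat_abs_sum) auto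
  show "(\<lambda>W. softmax_row m (\<lambda>a b. Yrv n nk X W a b / \<tau>) (fst p) (snd p) - 1 / real m)
      \<in> borel_measurable (WKQ_law n nk)"
    unfolding softmax_row_def by measurable
  show "(\<lambda>W. softmax_first_order m (Yrv n nk X W) (fst p) (snd p)) \<in> borel_measurable (WKQ_law n nk)"
    by measurable
  show "(\<integral>W. softmax_first_order m (Yrv n nk X W) (fst p) (snd p) \<partial>WKQ_law n nk) = 0"
    by (rule integral_softmax_first_order_Ymat)
  show "\<bar>softmax_row m (\<lambda>a b. Yrv n nk X W a b / \<tau>) (fst p) (snd p) - 1 / real m\<bar> \<le> 1"
    using p by (intro abs_softmax_row_minus_inverse_le_1[OF m]) auto
  show "\<bar>softmax_first_order m (Yrv n nk X W) (fst p) (snd p)\<bar> \<le> 5 * ?S W"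
    using abs_softmax_first_order_le[OF m, of "snd p" "Yrv n nk X W" "fst p" "?S W"] Y p
      Ymat_abs_sum_nonneg[of m n nk X W] by auto
  have "\<bar>Yrv n nk X W (fst p) c / \<tau>\<bar> \<le> ?S W / \<tau>" if "c < m" for c
    using Y[OF that] \<tau> by (simp add: abs_divide divide_right_mono)
  then have "\<bar>softmax_row m (\<lambda>a b. Yrv n nk X W a b / \<tau>) (fst p) (snd p) - 1 / real m
      - softmax_first_order m (\<lambda>a b. Yrv n nk X W a b / \<tau>) (fst p) (snd p)\<bar> \<le> 18 * (?S W / \<tau>)\<^sup>2"
    using p by (intro softmax_row_linearization[OF m]) auto
  moreover have "18 * (?S W / \<tau>)\<^sup>2 \<le> (1 / \<tau> * (5 * ?S W))\<^sup>2"
    using divide_right_mono[of "18 * (?S W)\<^sup>2" "25 * (?S W)\<^sup>2" "\<tau>\<^sup>2"]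
    by (simp add: power_divide power_mult_distrib)
  ultimately show "\<bar>softmax_row m (\<lambda>a b. Yrv n nk X W a b / \<tau>) (fst p) (snd p) - 1 / real m
      - 1 / \<tau> * softmax_first_order m (Yrv n nk X W) (fst p) (snd p)\<bar> \<le> (1 / \<tau> * (5 * ?S W))\<^sup>2"
    by (simp add: softmax_first_order_divide)
qed

lemma bigo_at_top_of_inverse_cube_bound:
  fixes f :: "real \<Rightarrow> real"
  assumes bound: "\<And>\<tau>. 1 \<le> \<tau> \<Longrightarrow> \<bar>f \<tau>\<bar> \<le> C * (1 / \<tau>) ^ 3"
    and "0 \<le> C" and "k = 0 \<Longrightarrow> C = 0"
  shows "f \<in> O[at_top](\<lambda>\<tau>. real k / \<tau> ^ 3)"
proof (rule bigoI[where c = C])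
  show "eventually (\<lambda>\<tau>. norm (f \<tau>) \<le> C * norm (real k / \<tau> ^ 3)) at_top"
    using eventually_ge_at_top[of "1::real"]
  proof eventually_elim
    case (elim \<tau>)
    have "C * (1 / \<tau>) ^ 3 \<le> C * \<bar>real k / \<tau> ^ 3\<bar>"
    proof (cases "k = 0")
      case True
      then show ?thesis using assms(3) by simp
    next
      case False
      then have "1 * (1 / \<tau>) ^ 3 \<le> real k * (1 / \<tau>) ^ 3"
        using elim by (intro mult_right_mono) auto
      then have "C * (1 / \<tau>) ^ 3 \<le> C * (real k * (1 / \<tau>) ^ 3)"
        using mult_left_mono assms(2) by fastforce
      also have "\<dots> = C * \<bar>real k / \<tau> ^ 3\<bar>" using elim by (simp add: power_divide)
      finally show ?thesis .
    qed
    then show ?case using bound[OF elim] by simp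
  qed
qed

theorem lemmaC5:
  fixes m n nk :: nat and X :: "nat \<Rightarrow> nat \<Rightarrow> real"
    and \<alpha> \<alpha>' \<beta> \<beta>' \<delta> \<delta>' \<omega> \<omega>' :: nat
  assumes "0 < m" and "0 < n"
    and "\<alpha> < m" "\<alpha>' < m" "\<beta> < m" "\<beta>' < m"
    and "\<delta> < m" "\<delta>' < m" "\<omega> < m" "\<omega>' < m"
  defines "E \<equiv> \<lambda>f. integral\<^sup>L (WKQ_law n nk) f"
    and "A \<equiv> \<lambda>\<tau> (W :: (nat \<times> nat \<Rightarrow> real) \<times> (nat \<times> nat \<Rightarrow> real)) a b.
                Amat m n nk X \<tau> (fst W) (snd W) a b"
  shows "(\<lambda>\<tau>. E (\<lambda>W. A \<tau> W \<alpha> \<alpha>' * A \<tau> W \<beta> \<beta>' * A \<tau> W \<delta> \<delta>' * A \<tau> W \<omega> \<omega>')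
             - E (\<lambda>W. A \<tau> W \<alpha> \<alpha>' * A \<tau> W \<beta> \<beta>') * E (\<lambda>W. A \<tau> W \<delta> \<delta>' * A \<tau> W \<omega> \<omega>')
             - real nk / (\<tau>\<^sup>2 * real m ^ 2) *
                 (kdelta \<alpha> \<alpha>' * kdelta \<delta> \<delta>' * S1 m n X \<beta> \<beta>' \<omega> \<omega>'
                + kdelta \<alpha> \<alpha>' * kdelta \<omega> \<omega>' * S1 m n X \<beta> \<beta>' \<delta> \<delta>'
                + kdelta \<beta> \<beta>' * kdelta \<delta> \<delta>' * S1 m n X \<alpha> \<alpha>' \<omega> \<omega>'
                + kdelta \<beta> \<beta>' * kdelta \<omega> \<omega>' * S1 m n X \<alpha> \<alpha>' \<delta> \<delta>'))
         \<in> O[at_top](\<lambda>\<tau>. real nk / \<tau> ^ 3)"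
  (is "?R \<in> _")
proof -
  define e where "e \<tau> p W = softmax_row m (\<lambda>a b. Yrv n nk X W a b / \<tau>) (fst p) (snd p) - 1 / real m"
    for \<tau> p W
  define L where "L p W = softmax_first_order m (Yrv n nk X W) (fst p) (snd p)" for p W
  define B where "B W = 5 * Ymat_abs_sum m n nk X W" for W
  define C where "C = 52 * (E (\<lambda>W. B W ^ 3) + (E (\<lambda>W. B W ^ 2))\<^sup>2)"
  have A: "A \<tau> W a b = kdelta a b + e \<tau> (a, b) W" for \<tau> W a b
    unfolding A_def Amat_def kdelta_def e_def by simp
  have EL: "E (\<lambda>W. L (a, b) W * L (c, d) W) = real nk / (real m)\<^sup>2 * S1 m n X a b c d" for a b c d
    unfolding E_def L_def using integral_softmax_first_order_Ymat_mult[OF assms(2)] by simp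
  have "\<bar>?R \<tau>\<bar> \<le> C * (1 / \<tau>) ^ 3" if "1 \<le> \<tau>" for \<tau>
  proof -
    interpret linearized_perturbation "WKQ_law n nk" "{..<m} \<times> {..<m}" "e \<tau>" L B "1 / \<tau>"
      unfolding e_def L_def B_def using linearized_perturbation_attention[OF assms(1) that] .
    show ?thesis
      using covariance_linearization[of "(\<alpha>, \<alpha>')" "(\<beta>, \<beta>')" "(\<delta>, \<delta>')" "(\<omega>, \<omega>')"
          "kdelta \<alpha> \<alpha>'" "kdelta \<beta> \<beta>'" "kdelta \<delta> \<delta>'" "kdelta \<omega> \<omega>'"] assms(3-10)
      unfolding A E_def[symmetric] EL C_def
      by (simp add: kdelta_def power_divide field_simps)
  qed
  moreover have "0 \<le> C"
    unfolding C_def E_def B_def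
    by (intro add_nonneg_nonneg mult_nonneg_nonneg integral_nonneg_AE AE_I2)
      (simp_all add: Ymat_abs_sum_nonneg)
  moreover have "C = 0" if "nk = 0"
    using that by (simp add: C_def B_def E_def Ymat_abs_sum_eq_0)
  ultimately show ?thesis by (rule bigo_at_top_of_inverse_cube_bound)
qed

end
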